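(* Let $d\ge 3$. In the subKautz digraph $sK(d,2)$, for every vertex $u$, the numbers $n_i$ of vertices at distance $i$ from $u$ are $n_0=1$, $n_1=d-1$, $n_2=(d-1)^2$, $n_3=2(d-1)$, $n_4=1$, and $n_i=0$ for $i\ge5$; moreover $sK(d,2)$ is antipodal. In the cyclic Kautz digraph $CK(d,3)$, for every vertex $u$, the numbers $N_i$ of vertices at distance $i$ from $u$ are $N_0=1$, $N_1=d-1$, $N_2=(d-1)^2$, $N_3=(d-1)^3-1$, $N_4=2(d-1)^2$, $N_5=d-1$, and $N_i=0$ for $i\ge 6$.
   Context: SubKautz digraph $sK(d,2)$: vertices $x_1x_2$ with $x_1\neq x_2$ in $\mathbb Z_{d+1}$; arcs $x_1x_2\to x_2x_3$ for $x_3\neq x_1,x_2$. Cyclic Kautz digraph $CK(d,3)$: vertices $x_1x_2x_3\in\mathbb Z_{d+1}^3$ with $x_1,x_2,x_3$ pairwise distinct; arcs $x_1x_2x_3\to x_2x_3y$ for $y\neq x_2,x_3$. A digraph is antipodal if every vertex $u$ has exactly one vertex $v$ at distance equal to the diameter from $u$, and simultaneously $u$ is at distance equal to the diameter from $v$. *)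

theory Defs
  imports Main "HOL-Library.Extended_Nat"
begin

definition gdist :: "('a \<times> 'a) set \<Rightarrow> 'a \<Rightarrow> 'a \<Rightarrow> enat" where
  "gdist A u v = (if \<exists>n. (u, v) \<in> A ^^ n then enat (LEAST n. (u, v) \<in> A ^^ n) else \<infinity>)"

definition gdiam :: "'a set \<Rightarrow> ('a \<times> 'a) set \<Rightarrow> enat" where
  "gdiam V A = (SUP p \<in> V \<times> V. gdist A (fst p) (snd p))"

definition antipodal :: "'a set \<Rightarrow> ('a \<times> 'a) set \<Rightarrow> bool" where
  "antipodal V A \<longleftrightarrow>
     (\<forall>u\<in>V. (\<exists>!v. v \<in> V \<and> gdist A u v = gdiam V A) \<and>
            (\<forall>v\<in>V. gdist A u v = gdiam V A \<longrightarrow> gdist A v u = gdiam V A))"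

definition nat_dist :: "'a set \<Rightarrow> ('a \<times> 'a) set \<Rightarrow> 'a \<Rightarrow> nat \<Rightarrow> nat" where
  "nat_dist V A u i = card {v \<in> V. gdist A u v = enat i}"

text \<open>SubKautz digraph sK(d,2); Z_{d+1} is represented by {0..d}.\<close>
definition sK_V :: "nat \<Rightarrow> (nat \<times> nat) set" where
  "sK_V d = {(x1, x2). x1 \<le> d \<and> x2 \<le> d \<and> x1 \<noteq> x2}"

definition sK_A :: "nat \<Rightarrow> ((nat \<times> nat) \<times> (nat \<times> nat)) set" where
  "sK_A d = {((x1, x2), (y1, y2)). (x1, x2) \<in> sK_V d \<and> y1 = x2 \<and> y2 \<le> d
                                    \<and> y2 \<noteq> x1 \<and> y2 \<noteq> x2}"

definition CK_V :: "nat \<Rightarrow> (nat \<times> nat \<times> nat) set" where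
  "CK_V d = {(x1, x2, x3). x1 \<le> d \<and> x2 \<le> d \<and> x3 \<le> d \<and>
                           x1 \<noteq> x2 \<and> x1 \<noteq> x3 \<and> x2 \<noteq> x3}"

definition CK_A :: "nat \<Rightarrow> ((nat \<times> nat \<times> nat) \<times> (nat \<times> nat \<times> nat)) set" where
  "CK_A d = {((x1, x2, x3), (y1, y2, y3)). (x1, x2, x3) \<in> CK_V d \<and> y1 = x2 \<and> y2 = x3
                                   \<and> y3 \<le> d \<and> y3 \<noteq> x2 \<and> y3 \<noteq> x3}"

end

theory Submission
  imports Defs
begin

text \<open>
  Both counts come from a breadth-first search: the closed balls satisfy
  \<open>gball A u (k + 1) = gball A u k \<union> A `` gball A u k\<close>, and the vertices at distance
  \<open>k + 1\<close> are those of \<open>gball A u (k + 1) - gball A u k\<close>.  Around a vertex \<open>x\<^sub>1x\<^sub>2\<close> of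
  \<open>sK(d,2)\<close>, resp. \<open>x\<^sub>1x\<^sub>2x\<^sub>3\<close> of \<open>CK(d,3)\<close>, every ball is cut out of the vertex set by a few
  (in)equalities between the first two letters of a word and \<open>x\<^sub>1, x\<^sub>2\<close>, resp. \<open>x\<^sub>2, x\<^sub>3\<close>, so
  every layer is a union of products of copies of \<open>{0..d}\<close> minus two points.  Growing a
  ball only ever needs a predecessor avoiding three given letters, which exists because
  \<open>d + 1 \<ge> 4\<close>.  In \<open>sK(d,2)\<close> the ball of radius 3 around \<open>x\<^sub>1x\<^sub>2\<close> misses only \<open>x\<^sub>2x\<^sub>1\<close>,
  so reversal is the antipodal map.
\<close>

definition gball :: "('a \<times> 'a) set \<Rightarrow> 'a \<Rightarrow> nat \<Rightarrow> 'a set" where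
  "gball A u k = {v. gdist A u v \<le> enat k}"

lemma gdist_le_enat_iff: "gdist A u v \<le> enat k \<longleftrightarrow> (\<exists>j\<le>k. (u, v) \<in> A ^^ j)"
proof (cases "\<exists>n. (u, v) \<in> A ^^ n")
  case True
  then show ?thesis
    unfolding gdist_def using LeastI_ex[OF True] by (auto intro: Least_le order_trans)
qed (auto simp: gdist_def)

lemma gball_0 [simp]: "gball A u 0 = {u}"
  unfolding gball_def gdist_le_enat_iff by auto

lemma gball_Suc: "gball A u (Suc k) = gball A u k \<union> A `` gball A u k"
proof -
  have "(\<exists>j\<le>Suc k. (u, v) \<in> A ^^ j) \<longleftrightarrow>
        (\<exists>j\<le>k. (u, v) \<in> A ^^ j) \<or> (\<exists>w. (\<exists>j\<le>k. (u, w) \<in> A ^^ j) \<and> (w, v) \<in> A)" for v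
  proof
    assume "\<exists>j\<le>Suc k. (u, v) \<in> A ^^ j"
    then obtain j where "j \<le> Suc k" "(u, v) \<in> A ^^ j" by blast
    then show "(\<exists>j\<le>k. (u, v) \<in> A ^^ j) \<or> (\<exists>w. (\<exists>j\<le>k. (u, w) \<in> A ^^ j) \<and> (w, v) \<in> A)"
      by (cases "j = Suc k") (auto simp: le_Suc_eq)
  next
    assume "(\<exists>j\<le>k. (u, v) \<in> A ^^ j) \<or> (\<exists>w. (\<exists>j\<le>k. (u, w) \<in> A ^^ j) \<and> (w, v) \<in> A)"
    then show "\<exists>j\<le>Suc k. (u, v) \<in> A ^^ j"
      by (metis le_SucI relpow_Suc_I Suc_le_mono)
  qed
  then show ?thesis by (auto simp: gball_def gdist_le_enat_iff)
qed

lemma gball_mono: "k \<le> m \<Longrightarrow> gball A u k \<subseteq> gball A u m"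
  by (auto simp: gball_def intro: order_trans)

lemma gball_Suc_eqI:
  assumes "n = Suc k"
    and "gball A u k \<union> A `` gball A u k \<subseteq> T" and "T \<subseteq> gball A u k \<union> A `` gball A u k"
  shows "gball A u n = T"
  unfolding assms(1) gball_Suc using assms(2,3) by (rule antisym)

lemma gdist_eq_0_iff: "gdist A u v = enat 0 \<longleftrightarrow> v = u"
  using gball_0[of A u] unfolding gball_def
  by (metis (mono_tags) antisym mem_Collect_eq singleton_iff zero_enat_def zero_le)

lemma gdist_eq_Suc_iff:
  "gdist A u v = enat (Suc k) \<longleftrightarrow> v \<in> gball A u (Suc k) - gball A u k"
  by (cases "gdist A u v") (auto simp: gball_def)

lemma nat_dist_0: "u \<in> V \<Longrightarrow> nat_dist V A u 0 = 1"
proof -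
  assume "u \<in> V"
  then have "{v \<in> V. v = u} = {u}" by blast
  then show ?thesis unfolding nat_dist_def gdist_eq_0_iff by simp
qed

lemma nat_dist_Suc:
  "gball A u (Suc k) \<subseteq> V \<Longrightarrow> nat_dist V A u (Suc k) = card (gball A u (Suc k) - gball A u k)"
  unfolding nat_dist_def gdist_eq_Suc_iff by (rule arg_cong[where f=card]) blast

lemma nat_dist_beyond:
  assumes "V \<subseteq> gball A u k" and "k < i" shows "nat_dist V A u i = 0"
proof -
  have "gdist A u v \<noteq> enat i" if "v \<in> V" for v
    using assms that by (auto simp: gball_def)
  then have "{v \<in> V. gdist A u v = enat i} = {}" by blast
  then show ?thesis unfolding nat_dist_def by (metis card.empty)
qed

lemma gdiam_eqI:
  assumes "\<And>w. w \<in> V \<Longrightarrow> V \<subseteq> gball A w k"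
    and "u \<in> V" "v \<in> V" "gdist A u v = enat k"
  shows "gdiam V A = enat k"
  unfolding gdiam_def
proof (rule antisym)
  show "(SUP p\<in>V \<times> V. gdist A (fst p) (snd p)) \<le> enat k"
    using assms(1) by (fastforce intro!: SUP_least simp: gball_def)
  show "enat k \<le> (SUP p\<in>V \<times> V. gdist A (fst p) (snd p))"
    using assms(2-4) by (intro SUP_upper2[of "(u, v)"]) auto
qed

lemma antipodalI:
  assumes "\<And>u. u \<in> V \<Longrightarrow> \<sigma> u \<in> V \<and> \<sigma> (\<sigma> u) = u \<and> {v \<in> V. gdist A u v = gdiam V A} = {\<sigma> u}"
  shows "antipodal V A"
  unfolding antipodal_def
proof (intro ballI conjI impI)
  fix u assume u: "u \<in> V"
  have far: "v \<in> V \<and> gdist A u v = gdiam V A \<longleftrightarrow> v = \<sigma> u" for v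
    using assms[OF u] by blast
  then show "\<exists>!v. v \<in> V \<and> gdist A u v = gdiam V A" by (intro ex1I[of _ "\<sigma> u"]) blast+
  fix v assume v: "v \<in> V" "gdist A u v = gdiam V A"
  then have "\<sigma> v = u" using far assms[OF u] by metis
  moreover have "\<sigma> v \<in> {w \<in> V. gdist A v w = gdiam V A}" using assms[OF v(1)] by simp
  ultimately show "gdist A v u = gdiam V A" by simp
qed

lemma ex_le_avoiding_three:
  assumes "3 \<le> (d::nat)" shows "\<exists>y\<le>d. y \<noteq> a \<and> y \<noteq> b \<and> y \<noteq> c"
proof -
  have "\<exists>y\<le>3::nat. y \<noteq> a \<and> y \<noteq> b \<and> y \<noteq> c" by presburger
  then show ?thesis using assms by (meson order_trans)
qed

lemma card_atMost_Diff_pair: "a \<le> d \<Longrightarrow> b \<le> d \<Longrightarrow> a \<noteq> b \<Longrightarrow> card ({..d} - {a, b}) = d - 1"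
  by (subst card_Diff_subset) auto

lemma card_Sigma_constant:
  assumes "finite A" and "\<And>x. x \<in> A \<Longrightarrow> finite (B x) \<and> card (B x) = n"
  shows "card (Sigma A B) = card A * n"
  using assms by (simp add: card_SigmaI)

lemma card_Sigma_atMost_Diff_pair:
  assumes "x \<le> d" "y \<le> d" "x \<noteq> y" "z = x \<or> z = y"
  shows "card (SIGMA q:{..d} - {x, y}. {..d} - {z, q}) = (d - 1)^2"
  using assms by (subst card_Sigma_constant[where n = "d - 1"])
    (auto simp: card_atMost_Diff_pair power2_eq_square)

lemma sK_A_ImageE:
  assumes "(p, q) \<in> sK_A d `` S"
  obtains x where "(x, p) \<in> S" "q \<noteq> x" "(p, q) \<in> sK_V d"
  using assms unfolding sK_A_def sK_V_def by blast

lemma sK_A_ImageI: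
  "(x, p) \<in> S \<Longrightarrow> (x, p) \<in> sK_V d \<Longrightarrow> q \<le> d \<Longrightarrow> q \<noteq> x \<Longrightarrow> q \<noteq> p \<Longrightarrow> (p, q) \<in> sK_A d `` S"
  unfolding sK_A_def by blast

lemma sK_gball_1:
  assumes u: "(a, b) \<in> sK_V d"
  shows "gball (sK_A d) (a, b) 1 = {(p, q) \<in> sK_V d. (p, q) = (a, b) \<or> p = b \<and> q \<noteq> a}"
  using u by (intro gball_Suc_eqI[of 1 0]) (auto simp: sK_A_def sK_V_def)

lemma sK_gball_2:
  assumes u: "(a, b) \<in> sK_V d"
  shows "gball (sK_A d) (a, b) 2 =
           {(p, q) \<in> sK_V d. (p, q) = (a, b) \<or> p = b \<and> q \<noteq> a \<or> p \<noteq> a \<and> p \<noteq> b \<and> q \<noteq> b}"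
  by (rule gball_Suc_eqI[of 2 1]; (unfold sK_gball_1[OF u])?;
      use u in \<open>auto simp: sK_V_def intro: sK_A_ImageI[of b] elim!: sK_A_ImageE\<close>)

lemma sK_gball_3:
  assumes d: "3 \<le> d" and u: "(a, b) \<in> sK_V d"
  shows "gball (sK_A d) (a, b) 3 = sK_V d - {(b, a)}"
proof (rule gball_Suc_eqI[of 3 2])
  let ?B = "gball (sK_A d) (a, b)"
  have ab: "a \<le> d" "b \<le> d" "a \<noteq> b" using u by (auto simp: sK_V_def)
  show "?B 2 \<union> sK_A d `` ?B 2 \<subseteq> sK_V d - {(b, a)}"
    unfolding sK_gball_2[OF u] by (auto elim!: sK_A_ImageE simp: sK_V_def)
  show "sK_V d - {(b, a)} \<subseteq> ?B 2 \<union> sK_A d `` ?B 2"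
  proof
    fix v assume v: "v \<in> sK_V d - {(b, a)}"
    obtain p q where v_pq: "v = (p, q)" by (cases v)
    consider "v \<in> ?B 2" | "p = a" "q \<noteq> b" | "p \<noteq> a" "p \<noteq> b" "q = b"
      using v unfolding sK_gball_2[OF u] v_pq by (auto simp: sK_V_def)
    then show "v \<in> ?B 2 \<union> sK_A d `` ?B 2"
    proof cases
      case 2
      obtain x where "x \<le> d" "x \<noteq> a" "x \<noteq> b" "x \<noteq> q" using ex_le_avoiding_three[OF d] by blast
      then have "(p, q) \<in> sK_A d `` ?B 2"
        using 2 v ab unfolding sK_gball_2[OF u] v_pq by (intro sK_A_ImageI[of x]) (auto simp: sK_V_def)
      then show ?thesis by (simp add: v_pq)
    next
      case 3
      obtain x where "x \<le> d" "x \<noteq> a" "x \<noteq> b" "x \<noteq> p" using ex_le_avoiding_three[OF d] by blast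
      then have "(p, q) \<in> sK_A d `` ?B 2"
        using 3 v ab unfolding sK_gball_2[OF u] v_pq by (intro sK_A_ImageI[of x]) (auto simp: sK_V_def)
      then show ?thesis by (simp add: v_pq)
    qed simp
  qed
qed simp

lemma sK_gball_4:
  assumes d: "3 \<le> d" and u: "(a, b) \<in> sK_V d"
  shows "gball (sK_A d) (a, b) 4 = sK_V d"
proof (rule gball_Suc_eqI[of 4 3])
  let ?B = "gball (sK_A d) (a, b)"
  show "?B 3 \<union> sK_A d `` ?B 3 \<subseteq> sK_V d"
    unfolding sK_gball_3[OF d u] by (auto elim!: sK_A_ImageE)
  obtain x where "x \<le> d" "x \<noteq> a" "x \<noteq> b" using ex_le_avoiding_three[OF d] by blast
  then have "(b, a) \<in> sK_A d `` ?B 3"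
    using u unfolding sK_gball_3[OF d u] by (intro sK_A_ImageI[of x]) (auto simp: sK_V_def)
  then show "sK_V d \<subseteq> ?B 3 \<union> sK_A d `` ?B 3" unfolding sK_gball_3[OF d u] by blast
qed simp

lemma card_sK_spheres:
  assumes "(a, b) \<in> sK_V d"
  shows "card {(p, q) \<in> sK_V d. p = b \<and> q \<noteq> a} = d - 1"
    and "card {(p, q) \<in> sK_V d. p \<noteq> a \<and> p \<noteq> b \<and> q \<noteq> b} = (d - 1)^2"
    and "card {(p, q) \<in> sK_V d. p = a \<and> q \<noteq> b \<or> p \<noteq> a \<and> q = b} = 2 * (d - 1)"
proof -
  have ab: "a \<le> d" "b \<le> d" "a \<noteq> b" using assms by (auto simp: sK_V_def)
  note card_ab = card_atMost_Diff_pair[OF ab]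
  have "{(p, q) \<in> sK_V d. p = b \<and> q \<noteq> a} = Pair b ` ({..d} - {a, b})"
    using ab by (auto simp: sK_V_def)
  then show "card {(p, q) \<in> sK_V d. p = b \<and> q \<noteq> a} = d - 1"
    by (simp add: card_image inj_on_def card_ab)
  have "{(p, q) \<in> sK_V d. p \<noteq> a \<and> p \<noteq> b \<and> q \<noteq> b} = (SIGMA p:{..d} - {a, b}. {..d} - {b, p})"
    by (auto simp: sK_V_def)
  then show "card {(p, q) \<in> sK_V d. p \<noteq> a \<and> p \<noteq> b \<and> q \<noteq> b} = (d - 1)^2"
    using ab by (simp add: card_Sigma_atMost_Diff_pair del: card_SigmaI)
  have "{(p, q) \<in> sK_V d. p = a \<and> q \<noteq> b \<or> p \<noteq> a \<and> q = b}
      = Pair a ` ({..d} - {a, b}) \<union> (\<lambda>p. (p, b)) ` ({..d} - {a, b})"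
    using ab by (auto simp: sK_V_def)
  also have "card \<dots> = 2 * (d - 1)"
    using ab by (subst card_Un_disjoint) (auto simp: card_image inj_on_def card_ab)
  finally show "card {(p, q) \<in> sK_V d. p = a \<and> q \<noteq> b \<or> p \<noteq> a \<and> q = b} = 2 * (d - 1)" .
qed

lemma sK_antipode:
  assumes d: "3 \<le> d" and u: "(a, b) \<in> sK_V d"
  shows "{v \<in> sK_V d. gdist (sK_A d) (a, b) v = enat 4} = {(b, a)}"
proof -
  have "{v \<in> sK_V d. gdist (sK_A d) (a, b) v = enat 4} =
        sK_V d \<inter> (gball (sK_A d) (a, b) 4 - gball (sK_A d) (a, b) 3)"
    using gdist_eq_Suc_iff[of "sK_A d" "(a, b)" _ 3] by auto
  moreover have "(b, a) \<in> sK_V d" using u by (auto simp: sK_V_def)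
  ultimately show ?thesis unfolding sK_gball_3[OF d u] sK_gball_4[OF d u] by auto
qed

lemma sK_distance_counts:
  assumes d: "3 \<le> d" and u: "u \<in> sK_V d"
  shows "nat_dist (sK_V d) (sK_A d) u 0 = 1 \<and>
         nat_dist (sK_V d) (sK_A d) u 1 = d - 1 \<and>
         nat_dist (sK_V d) (sK_A d) u 2 = (d - 1)^2 \<and>
         nat_dist (sK_V d) (sK_A d) u 3 = 2 * (d - 1) \<and>
         nat_dist (sK_V d) (sK_A d) u 4 = 1 \<and>
         (\<forall>i\<ge>5. nat_dist (sK_V d) (sK_A d) u i = 0)"
proof -
  obtain a b where ab: "u = (a, b)" by (cases u)
  note B = sK_gball_1[OF u[unfolded ab]] sK_gball_2[OF u[unfolded ab]]
    sK_gball_3[OF d u[unfolded ab]] sK_gball_4[OF d u[unfolded ab]]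
  note C = card_sK_spheres[OF u[unfolded ab]]
  let ?B = "gball (sK_A d) (a, b)" and ?n = "nat_dist (sK_V d) (sK_A d) (a, b)"
  have n: "?n m = card (?B m - ?B k)" if "m = Suc k" "m \<le> 4" for m k
    using gball_mono[OF that(2), of "sK_A d" "(a, b)"] unfolding B(4) that(1)
    by (rule nat_dist_Suc)
  have "?B 1 - ?B 0 = {(p, q) \<in> sK_V d. p = b \<and> q \<noteq> a}"
    unfolding B(1) gball_0 by auto
  then have "?n 1 = d - 1" using n[of 1 0] C by simp
  moreover have "?B 2 - ?B 1 = {(p, q) \<in> sK_V d. p \<noteq> a \<and> p \<noteq> b \<and> q \<noteq> b}"
    unfolding B(1,2) by auto
  then have "?n 2 = (d - 1)^2" using n[of 2 1] C by simp
  moreover have "?B 3 - ?B 2 = {(p, q) \<in> sK_V d. p = a \<and> q \<noteq> b \<or> p \<noteq> a \<and> q = b}"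
    unfolding B(2,3) using u by (auto simp: ab sK_V_def)
  then have "?n 3 = 2 * (d - 1)" using n[of 3 2] C by simp
  moreover have "?n 4 = 1"
    unfolding nat_dist_def sK_antipode[OF d u[unfolded ab]] by simp
  moreover have "?n i = 0" if "i \<ge> 5" for i
    using that by (intro nat_dist_beyond[of _ _ _ 4]) (auto simp: B(4))
  ultimately show ?thesis using nat_dist_0 u unfolding ab by auto
qed

lemma sK_antipodal:
  assumes d: "3 \<le> d" shows "antipodal (sK_V d) (sK_A d)"
proof -
  have diam: "gdiam (sK_V d) (sK_A d) = enat 4"
  proof (rule gdiam_eqI)
    show "sK_V d \<subseteq> gball (sK_A d) w 4" if "w \<in> sK_V d" for w
      using sK_gball_4[OF d, of "fst w" "snd w"] that by simp
    show "(0, 1) \<in> sK_V d" "(1, 0) \<in> sK_V d" using d by (auto simp: sK_V_def)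
    then show "gdist (sK_A d) (0, 1) (1, 0) = enat 4"
      using sK_antipode[OF d, of 0 1] by blast
  qed
  show ?thesis
  proof (intro antipodalI[where \<sigma> = prod.swap])
    fix u assume "u \<in> sK_V d"
    moreover obtain a b where "u = (a, b)" by (cases u)
    ultimately show "prod.swap u \<in> sK_V d \<and> prod.swap (prod.swap u) = u \<and>
        {v \<in> sK_V d. gdist (sK_A d) u v = gdiam (sK_V d) (sK_A d)} = {prod.swap u}"
      unfolding diam using sK_antipode[OF d] by (auto simp: sK_V_def)
  qed
qed

lemma CK_A_ImageE:
  assumes "(p, q, r) \<in> CK_A d `` S"
  obtains x where "(x, p, q) \<in> S" "(p, q, r) \<in> CK_V d"
  using assms unfolding CK_A_def CK_V_def by blast

lemma CK_A_ImageI: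
  "(x, p, q) \<in> S \<Longrightarrow> (x, p, q) \<in> CK_V d \<Longrightarrow> r \<le> d \<Longrightarrow> r \<noteq> p \<Longrightarrow> r \<noteq> q \<Longrightarrow>
   (p, q, r) \<in> CK_A d `` S"
  unfolding CK_A_def by blast

lemma CK_gball_1:
  assumes u: "(a, b, c) \<in> CK_V d"
  shows "gball (CK_A d) (a, b, c) 1 = {(p, q, r) \<in> CK_V d. (p, q, r) = (a, b, c) \<or> p = b \<and> q = c}"
  using u by (intro gball_Suc_eqI[of 1 0]) (auto simp: CK_A_def CK_V_def)

lemma CK_gball_2:
  assumes u: "(a, b, c) \<in> CK_V d"
  shows "gball (CK_A d) (a, b, c) 2 =
           {(p, q, r) \<in> CK_V d. (p, q, r) = (a, b, c) \<or> p = b \<and> q = c \<or> p = c \<and> q \<noteq> b}"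
  by (rule gball_Suc_eqI[of 2 1]; (unfold CK_gball_1[OF u])?;
      use u in \<open>auto simp: CK_V_def intro: CK_A_ImageI[of b] elim!: CK_A_ImageE\<close>)

lemma CK_gball_3:
  assumes u: "(a, b, c) \<in> CK_V d"
  shows "gball (CK_A d) (a, b, c) 3 =
           {(p, q, r) \<in> CK_V d. p = b \<and> q = c \<or> p = c \<and> q \<noteq> b \<or> p \<noteq> b \<and> p \<noteq> c \<and> q \<noteq> c}"
  by (rule gball_Suc_eqI[of 3 2]; (unfold CK_gball_2[OF u])?;
      use u in \<open>auto simp: CK_V_def intro: CK_A_ImageI[of c] elim!: CK_A_ImageE\<close>)

lemma CK_gball_4:
  assumes d: "3 \<le> d" and u: "(a, b, c) \<in> CK_V d"
  shows "gball (CK_A d) (a, b, c) 4 = CK_V d - {(p, q, r). p = c \<and> q = b}"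
proof (rule gball_Suc_eqI[of 4 3])
  let ?B = "gball (CK_A d) (a, b, c)"
  have abc: "b \<le> d" "c \<le> d" "b \<noteq> c" using u by (auto simp: CK_V_def)
  show "?B 3 \<union> CK_A d `` ?B 3 \<subseteq> CK_V d - {(p, q, r). p = c \<and> q = b}"
    unfolding CK_gball_3[OF u] by (auto elim!: CK_A_ImageE simp: CK_V_def)
  show "CK_V d - {(p, q, r). p = c \<and> q = b} \<subseteq> ?B 3 \<union> CK_A d `` ?B 3"
  proof
    fix v assume v: "v \<in> CK_V d - {(p, q, r). p = c \<and> q = b}"
    obtain p q r where v_pqr: "v = (p, q, r)" by (cases v)
    consider "v \<in> ?B 3" | "p = b" "q \<noteq> c" | "p \<noteq> b" "p \<noteq> c" "q = c"
      using v unfolding CK_gball_3[OF u] v_pqr by (auto simp: CK_V_def)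
    then show "v \<in> ?B 3 \<union> CK_A d `` ?B 3"
    proof cases
      case 2
      obtain x where "x \<le> d" "x \<noteq> b" "x \<noteq> c" "x \<noteq> q" using ex_le_avoiding_three[OF d] by blast
      then have "(p, q, r) \<in> CK_A d `` ?B 3"
        using 2 v abc unfolding CK_gball_3[OF u] v_pqr by (intro CK_A_ImageI[of x]) (auto simp: CK_V_def)
      then show ?thesis by (simp add: v_pqr)
    next
      case 3
      obtain x where "x \<le> d" "x \<noteq> b" "x \<noteq> c" "x \<noteq> p" using ex_le_avoiding_three[OF d] by blast
      then have "(p, q, r) \<in> CK_A d `` ?B 3"
        using 3 v abc unfolding CK_gball_3[OF u] v_pqr by (intro CK_A_ImageI[of x]) (auto simp: CK_V_def)
      then show ?thesis by (simp add: v_pqr)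
    qed simp
  qed
qed simp

lemma CK_gball_5:
  assumes d: "3 \<le> d" and u: "(a, b, c) \<in> CK_V d"
  shows "gball (CK_A d) (a, b, c) 5 = CK_V d"
proof (rule gball_Suc_eqI[of 5 4])
  let ?B = "gball (CK_A d) (a, b, c)"
  show "?B 4 \<union> CK_A d `` ?B 4 \<subseteq> CK_V d"
    unfolding CK_gball_4[OF d u] by (auto elim!: CK_A_ImageE)
  obtain x where "x \<le> d" "x \<noteq> b" "x \<noteq> c" using ex_le_avoiding_three[OF d] by blast
  then have "(c, b, r) \<in> CK_A d `` ?B 4" if "(c, b, r) \<in> CK_V d" for r
    using that unfolding CK_gball_4[OF d u] by (intro CK_A_ImageI[of x]) (auto simp: CK_V_def)
  then show "CK_V d \<subseteq> ?B 4 \<union> CK_A d `` ?B 4" unfolding CK_gball_4[OF d u] by blast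
qed simp

lemma card_CK_spheres:
  assumes "(a, b, c) \<in> CK_V d"
  shows "card {(p, q, r) \<in> CK_V d. p = b \<and> q = c} = d - 1"
    and "card {(p, q, r) \<in> CK_V d. p = c \<and> q \<noteq> b} = (d - 1)^2"
    and "card ({(p, q, r) \<in> CK_V d. p \<noteq> b \<and> p \<noteq> c \<and> q \<noteq> c} - {(a, b, c)}) = (d - 1)^3 - 1"
    and "card {(p, q, r) \<in> CK_V d. p = b \<and> q \<noteq> c \<or> p \<noteq> b \<and> p \<noteq> c \<and> q = c} = 2 * (d - 1)^2"
    and "card {(p, q, r) \<in> CK_V d. p = c \<and> q = b} = d - 1"
proof -
  have abc: "a \<le> d" "b \<le> d" "c \<le> d" "a \<noteq> b" "a \<noteq> c" "b \<noteq> c" using assms by (auto simp: CK_V_def)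
  note card_bc = card_atMost_Diff_pair[OF abc(2,3,6)]
  have "{(p, q, r) \<in> CK_V d. p = b \<and> q = c} = Pair b ` Pair c ` ({..d} - {b, c})"
    using abc by (auto simp: CK_V_def)
  then show "card {(p, q, r) \<in> CK_V d. p = b \<and> q = c} = d - 1"
    by (simp add: card_image inj_on_def card_bc)
  have "{(p, q, r) \<in> CK_V d. p = c \<and> q = b} = Pair c ` Pair b ` ({..d} - {b, c})"
    using abc by (auto simp: CK_V_def)
  then show "card {(p, q, r) \<in> CK_V d. p = c \<and> q = b} = d - 1"
    by (simp add: card_image inj_on_def card_bc)
  have "{(p, q, r) \<in> CK_V d. p = c \<and> q \<noteq> b} = Pair c ` (SIGMA q:{..d} - {b, c}. {..d} - {c, q})"
    using abc by (auto simp: CK_V_def)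
  then show "card {(p, q, r) \<in> CK_V d. p = c \<and> q \<noteq> b} = (d - 1)^2"
    using abc by (simp add: card_image inj_on_def card_Sigma_atMost_Diff_pair del: card_SigmaI)
  have "{(p, q, r) \<in> CK_V d. p \<noteq> b \<and> p \<noteq> c \<and> q \<noteq> c} =
        (SIGMA p:{..d} - {b, c}. SIGMA q:{..d} - {p, c}. {..d} - {p, q})"
    using abc by (auto simp: CK_V_def)
  moreover have "card (SIGMA p:{..d} - {b, c}. SIGMA q:{..d} - {p, c}. {..d} - {p, q}) = (d - 1)^3"
    using abc by (subst card_Sigma_constant[where n = "(d - 1)^2"])
      (auto simp: card_Sigma_atMost_Diff_pair card_bc power_Suc2 power2_eq_square numeral_3_eq_3)
  moreover have "(a, b, c) \<in> {(p, q, r) \<in> CK_V d. p \<noteq> b \<and> p \<noteq> c \<and> q \<noteq> c}"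
    using assms abc by simp
  ultimately show "card ({(p, q, r) \<in> CK_V d. p \<noteq> b \<and> p \<noteq> c \<and> q \<noteq> c} - {(a, b, c)}) = (d - 1)^3 - 1"
    by (simp only: card_Diff_singleton)
  have "{(p, q, r) \<in> CK_V d. p = b \<and> q \<noteq> c \<or> p \<noteq> b \<and> p \<noteq> c \<and> q = c} =
        Pair b ` (SIGMA q:{..d} - {b, c}. {..d} - {b, q}) \<union>
        (\<lambda>(p, r). (p, c, r)) ` (SIGMA p:{..d} - {b, c}. {..d} - {c, p})"
    using abc by (auto simp: CK_V_def)
  also have "card \<dots> = 2 * (d - 1)^2"
    using abc by (subst card_Un_disjoint)
      (auto simp: card_image inj_on_def card_Sigma_atMost_Diff_pair simp del: card_SigmaI)
  finally show "card {(p, q, r) \<in> CK_V d. p = b \<and> q \<noteq> c \<or> p \<noteq> b \<and> p \<noteq> c \<and> q = c} = 2 * (d - 1)^2" .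
qed

lemma CK_distance_counts:
  assumes d: "3 \<le> d" and u: "u \<in> CK_V d"
  shows "nat_dist (CK_V d) (CK_A d) u 0 = 1 \<and>
         nat_dist (CK_V d) (CK_A d) u 1 = d - 1 \<and>
         nat_dist (CK_V d) (CK_A d) u 2 = (d - 1)^2 \<and>
         nat_dist (CK_V d) (CK_A d) u 3 = (d - 1)^3 - 1 \<and>
         nat_dist (CK_V d) (CK_A d) u 4 = 2 * (d - 1)^2 \<and>
         nat_dist (CK_V d) (CK_A d) u 5 = d - 1 \<and>
         (\<forall>i\<ge>6. nat_dist (CK_V d) (CK_A d) u i = 0)"
proof -
  obtain a b c where abc: "u = (a, b, c)" by (cases u)
  note B = CK_gball_1[OF u[unfolded abc]] CK_gball_2[OF u[unfolded abc]] CK_gball_3[OF u[unfolded abc]]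
    CK_gball_4[OF d u[unfolded abc]] CK_gball_5[OF d u[unfolded abc]]
  note C = card_CK_spheres[OF u[unfolded abc]]
  let ?B = "gball (CK_A d) (a, b, c)" and ?n = "nat_dist (CK_V d) (CK_A d) (a, b, c)"
  have n: "?n m = card (?B m - ?B k)" if "m = Suc k" "m \<le> 5" for m k
    using gball_mono[OF that(2), of "CK_A d" "(a, b, c)"] unfolding B(5) that(1)
    by (rule nat_dist_Suc)
  have "?B 1 - ?B 0 = {(p, q, r) \<in> CK_V d. p = b \<and> q = c}"
    using u unfolding B(1) gball_0 abc by (auto simp: CK_V_def)
  then have "?n 1 = d - 1" using n[of 1 0] C by simp
  moreover have "?B 2 - ?B 1 = {(p, q, r) \<in> CK_V d. p = c \<and> q \<noteq> b}"
    using u unfolding B(1,2) abc by (auto simp: CK_V_def)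
  then have "?n 2 = (d - 1)^2" using n[of 2 1] C by simp
  moreover have "?B 3 - ?B 2 = {(p, q, r) \<in> CK_V d. p \<noteq> b \<and> p \<noteq> c \<and> q \<noteq> c} - {(a, b, c)}"
    using u unfolding B(2,3) abc by (auto simp: CK_V_def)
  then have "?n 3 = (d - 1)^3 - 1" using n[of 3 2] C by simp
  moreover have "?B 4 - ?B 3 = {(p, q, r) \<in> CK_V d. p = b \<and> q \<noteq> c \<or> p \<noteq> b \<and> p \<noteq> c \<and> q = c}"
    using u unfolding B(3,4) abc by (auto simp: CK_V_def)
  then have "?n 4 = 2 * (d - 1)^2" using n[of 4 3] C by simp
  moreover have "?B 5 - ?B 4 = {(p, q, r) \<in> CK_V d. p = c \<and> q = b}"
    unfolding B(4,5) by auto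
  then have "?n 5 = d - 1" using n[of 5 4] C by simp
  moreover have "?n i = 0" if "i \<ge> 6" for i
    using that by (intro nat_dist_beyond[of _ _ _ 5]) (auto simp: B(5))
  ultimately show ?thesis using nat_dist_0 u unfolding abc by auto
qed

theorem mainTheorem14:
  fixes d :: nat
  assumes "d \<ge> 3"
  shows "(\<forall>u \<in> sK_V d.
            nat_dist (sK_V d) (sK_A d) u 0 = 1 \<and>
            nat_dist (sK_V d) (sK_A d) u 1 = d - 1 \<and>
            nat_dist (sK_V d) (sK_A d) u 2 = (d - 1)^2 \<and>
            nat_dist (sK_V d) (sK_A d) u 3 = 2 * (d - 1) \<and>
            nat_dist (sK_V d) (sK_A d) u 4 = 1 \<and>
            (\<forall>i\<ge>5. nat_dist (sK_V d) (sK_A d) u i = 0))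
       \<and> antipodal (sK_V d) (sK_A d)
       \<and> (\<forall>u \<in> CK_V d.
            nat_dist (CK_V d) (CK_A d) u 0 = 1 \<and>
            nat_dist (CK_V d) (CK_A d) u 1 = d - 1 \<and>
            nat_dist (CK_V d) (CK_A d) u 2 = (d - 1)^2 \<and>
            nat_dist (CK_V d) (CK_A d) u 3 = (d - 1)^3 - 1 \<and>
            nat_dist (CK_V d) (CK_A d) u 4 = 2 * (d - 1)^2 \<and>
            nat_dist (CK_V d) (CK_A d) u 5 = d - 1 \<and>
            (\<forall>i\<ge>6. nat_dist (CK_V d) (CK_A d) u i = 0))"
  using sK_distance_counts[OF assms] sK_antipodal[OF assms] CK_distance_counts[OF assms] by blast

end
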